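(* Let $(X,E,\ell)$ be a weighted tree with similarity matrix $Z=(e^{-d(x,y)})_{x,y\in X}$. Then $Z$ is invertible and for $x,y\in X$ with $x\neq y$: $$Z^{-1}(x,x)=1+\sum_{e\ni x}\frac{e^{-2\ell(e)}}{1-e^{-2\ell(e)}},$$ $Z^{-1}(x,y)=0$ if $x$ and $y$ are not adjacent, and if $e=\{x,y\}\in E$, $$Z^{-1}(x,y)=-\frac{e^{-\ell(e)}}{1-e^{-2\ell(e)}}.$$
   Context: A weighted tree is a triple $(X,E,\ell)$ where $(X,E)$ is a finite simple undirected graph that is a tree, and $\ell\colon E\to(0,\infty)$ assigns lengths to edges. Its vertex set $X$ is a metric space with $d(x,y)$ the total length of the unique simple path from $x$ to $y$. The sum $\sum_{e\ni x}$ is over edges containing $x$. *)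

theory Defs
  imports "HOL-Analysis.Analysis"
begin

text \<open>Graphs on the vertex set UNIV of a finite type; edges are 2-element sets.\<close>

definition is_walk_edges :: "'a set set \<Rightarrow> 'a list \<Rightarrow> bool" where
  "is_walk_edges E p \<longleftrightarrow> (\<forall>i. Suc i < length p \<longrightarrow> {p ! i, p ! Suc i} \<in> E)"

definition simple_path :: "'a set set \<Rightarrow> 'a \<Rightarrow> 'a \<Rightarrow> 'a list \<Rightarrow> bool" where
  "simple_path E x y p \<longleftrightarrow> p \<noteq> [] \<and> hd p = x \<and> last p = y \<and> distinct p \<and> is_walk_edges E p"

definition simple_graph :: "'a set set \<Rightarrow> bool" where
  "simple_graph E \<longleftrightarrow> (\<forall>e\<in>E. \<exists>x y. x \<noteq> y \<and> e = {x, y})"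

definition graph_connected :: "'a set set \<Rightarrow> bool" where
  "graph_connected E \<longleftrightarrow> (\<forall>x y. \<exists>p. simple_path E x y p)"

definition graph_acyclic :: "'a set set \<Rightarrow> bool" where
  "graph_acyclic E \<longleftrightarrow> \<not> (\<exists>p. length p \<ge> 3 \<and> distinct p \<and> is_walk_edges E p \<and> {last p, hd p} \<in> E)"

definition weighted_tree :: "'a set set \<Rightarrow> ('a set \<Rightarrow> real) \<Rightarrow> bool" where
  "weighted_tree E l \<longleftrightarrow> simple_graph E \<and> graph_connected E \<and> graph_acyclic E \<and> (\<forall>e\<in>E. l e > 0)"

definition path_length :: "('a set \<Rightarrow> real) \<Rightarrow> 'a list \<Rightarrow> real" where
  "path_length l p = (\<Sum>i<length p - 1. l {p ! i, p ! Suc i})"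

definition tree_dist :: "'a set set \<Rightarrow> ('a set \<Rightarrow> real) \<Rightarrow> 'a \<Rightarrow> 'a \<Rightarrow> real" where
  "tree_dist E l x y = path_length l (THE p. simple_path E x y p)"

definition similarity_matrix :: "'a set set \<Rightarrow> ('a set \<Rightarrow> real) \<Rightarrow> real ^ 'a ^ 'a" where
  "similarity_matrix E l = (\<chi> x y. exp (- tree_dist E l x y))"

end

theory Submission
  imports Defs
begin

(* Let W be the matrix claimed to be the inverse and write a(t) = e^(-2t) / (1 - e^(-2t)),
   b(t) = e^(-t) / (1 - e^(-2t)).  In column z of Z W, each neighbour y of z contributes
   e^(-d(x,z)) a(l{y,z}) - e^(-d(x,y)) b(l{y,z}) on top of the term e^(-d(x,z)).  If y lies
   farther from x than z, then d(x,y) = d(x,z) + l{y,z}, and the contribution vanishes because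
   e^(-t) b(t) = a(t).  If y lies nearer, then d(x,y) = d(x,z) - l{y,z}, and the contribution is
   -e^(-d(x,z)) because e^t b(t) = 1 + a(t).  In a tree all neighbours of z are farther from z
   itself, while for x <> z exactly one neighbour, the predecessor of z on the path from x,
   is nearer.  Hence Z W = 1. *)

lemma is_walk_edges_Nil [simp]: "is_walk_edges E []"
  and is_walk_edges_singleton [simp]: "is_walk_edges E [x]"
  by (simp_all add: is_walk_edges_def)

lemma is_walk_edges_Cons_Cons [simp]:
  "is_walk_edges E (x # y # xs) \<longleftrightarrow> {x, y} \<in> E \<and> is_walk_edges E (y # xs)"
  unfolding is_walk_edges_def by (simp add: All_less_Suc2)

lemma is_walk_edges_append:
  "is_walk_edges E (xs @ ys) \<longleftrightarrow> is_walk_edges E xs \<and> is_walk_edges E ys \<and>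
     (xs \<noteq> [] \<and> ys \<noteq> [] \<longrightarrow> {last xs, hd ys} \<in> E)"
proof (induction xs rule: induct_list012)
  case (2 x)
  then show ?case by (cases ys) auto
qed auto

lemma simple_path_split:
  assumes "simple_path E x z (p @ b # q)"
  shows "simple_path E x b (p @ [b])" and "simple_path E b z (b # q)"
  using assms by (auto simp: simple_path_def is_walk_edges_append hd_append split: if_splits)

lemma simple_path_snoc:
  assumes "simple_path E x y p" "{y, b} \<in> E" "b \<notin> set p"
  shows "simple_path E x b (p @ [b])"
  using assms by (auto simp: simple_path_def is_walk_edges_append)

lemma simple_path_loop:
  assumes "simple_path E x x p"
  shows "p = [x]"
  using assms by (cases p) (auto simp: simple_path_def split: if_splits)

lemma acyclic_no_closing_edge:
  assumes "graph_acyclic E" "simple_path E u v r" "length r \<ge> 3"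
  shows "{v, u} \<notin> E"
  using assms unfolding graph_acyclic_def simple_path_def by blast

lemma acyclic_simple_path_unique:
  assumes acyclic: "graph_acyclic E" and "simple_path E x y p" "simple_path E x y q"
  shows "p = q"
  using assms(3,2)
proof (induction q arbitrary: p y rule: rev_induct)
  case Nil
  then show ?case by (simp add: simple_path_def)
next
  case (snoc a q)
  have ya: "y = a" using snoc.prems(1) by (simp add: simple_path_def)
  show ?case
  proof (cases "q = []")
    case True
    then have "x = y" using snoc.prems(1) by (auto simp: simple_path_def)
    then show ?thesis using True ya simple_path_loop snoc.prems(2) by simp
  next
    case False
    define b where "b = last q"
    have q_snoc: "butlast q @ [b] = q" using False by (simp add: b_def)
    then have "simple_path E x y (butlast q @ b # [a])"
      using snoc.prems(1) by (metis append.assoc append_Cons append_Nil)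
    then have path_q: "simple_path E x b q" and "simple_path E b y [b, a]"
      using simple_path_split q_snoc by metis+
    then have edge: "{b, y} \<in> E" and "b \<noteq> y" by (auto simp: simple_path_def ya)
    show ?thesis
    proof (cases "b \<in> set p")
      case True
      then obtain p1 p2 where p: "p = p1 @ b # p2" by (meson split_list)
      have path_p: "simple_path E x y (p1 @ b # p2)" using snoc.prems(2) p by simp
      have "p1 @ [b] = q" using snoc.IH[OF path_q simple_path_split(1)[OF path_p]] .
      have path_p2: "simple_path E b y (b # p2)" using simple_path_split(2)[OF path_p] .
      then have "p2 \<noteq> []" using \<open>b \<noteq> y\<close> by (auto simp: simple_path_def)
      moreover have "length (b # p2) < 3"
        using acyclic_no_closing_edge[OF acyclic path_p2] edge by (force simp: insert_commute)
      ultimately have "p2 = [y]" using path_p2 by (cases p2) (auto simp: simple_path_def)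
      then show ?thesis using p \<open>p1 @ [b] = q\<close> ya by simp
    next
      case False
      then have "simple_path E x b (p @ [b])"
        using simple_path_snoc[OF snoc.prems(2)] edge by (simp add: insert_commute)
      then have "p @ [b] = q" using snoc.IH path_q by blast
      moreover have "y \<in> set p" using snoc.prems(2) by (auto simp: simple_path_def)
      ultimately show ?thesis using snoc.prems(1) ya by (auto simp: simple_path_def)
    qed
  qed
qed

lemma simple_graph_edge_neq:
  assumes "simple_graph E" "{y, z} \<in> E"
  shows "y \<noteq> z"
  using assms unfolding simple_graph_def by (metis doubleton_eq_iff insert_absorb2)

lemma sum_edges_at:
  assumes "simple_graph E"
  shows "(\<Sum>e\<in>{e\<in>E. z \<in> e}. f e) = (\<Sum>y\<in>{y. {y, z} \<in> E}. f {y, z})"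
proof -
  have "{e\<in>E. z \<in> e} = (\<lambda>y. {y, z}) ` {y. {y, z} \<in> E}"
  proof (intro set_eqI iffI)
    fix e assume e: "e \<in> {e\<in>E. z \<in> e}"
    then obtain a b where "e = {a, b}" using assms unfolding simple_graph_def by blast
    then show "e \<in> (\<lambda>y. {y, z}) ` {y. {y, z} \<in> E}"
      using e by (auto simp: insert_commute)
  qed auto
  moreover have "inj_on (\<lambda>y. {y, z}) {y. {y, z} \<in> E}"
    using simple_graph_edge_neq[OF assms] by (auto simp: inj_on_def doubleton_eq_iff)
  ultimately show ?thesis by (simp add: sum.reindex)
qed

lemma path_length_snoc:
  assumes "p \<noteq> []"
  shows "path_length l (p @ [y]) = path_length l p + l {last p, y}"
proof -
  obtain n where n: "length p = Suc n" using assms by (cases p) auto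
  have "path_length l (p @ [y]) = (\<Sum>i<n. l {(p @ [y]) ! i, (p @ [y]) ! Suc i}) + l {p ! n, y}"
    unfolding path_length_def using n by (simp add: nth_append)
  also have "(\<Sum>i<n. l {(p @ [y]) ! i, (p @ [y]) ! Suc i}) = path_length l p"
    unfolding path_length_def using n by (intro sum.cong) (auto simp: nth_append)
  finally show ?thesis using n assms by (simp add: last_conv_nth)
qed

lemma tree_dist_eq_path_length:
  assumes "graph_acyclic E" "simple_path E x y p"
  shows "tree_dist E l x y = path_length l p"
  unfolding tree_dist_def using assms acyclic_simple_path_unique by (metis the_equality)

lemma tree_dist_self:
  assumes "graph_acyclic E"
  shows "tree_dist E l x x = 0"
  using tree_dist_eq_path_length[OF assms, of x x "[x]"] by (simp add: simple_path_def path_length_def)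

lemma tree_dist_edge:
  assumes "graph_acyclic E" "{x, y} \<in> E" "x \<noteq> y"
  shows "tree_dist E l x y = l {x, y}"
  using tree_dist_eq_path_length[OF assms(1), of x y "[x, y]"] assms(2,3)
  by (simp add: simple_path_def path_length_def)

lemma tree_dist_snoc:
  assumes "graph_acyclic E" "simple_path E x z p" "{z, y} \<in> E" "y \<notin> set p"
  shows "tree_dist E l x y = tree_dist E l x z + l {z, y}"
proof -
  have "p \<noteq> []" "last p = z" using assms(2) by (simp_all add: simple_path_def)
  then show ?thesis
    using tree_dist_eq_path_length[OF assms(1) simple_path_snoc[OF assms(2-4)]]
      tree_dist_eq_path_length[OF assms(1,2)] path_length_snoc by metis
qed

lemma tree_dist_neighbours:
  assumes simple: "simple_graph E" and "graph_connected E" and acyclic: "graph_acyclic E"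
    and "x \<noteq> z"
  obtains y0 where "{y0, z} \<in> E" "tree_dist E l x z = tree_dist E l x y0 + l {y0, z}"
    "\<And>y. {y, z} \<in> E \<Longrightarrow> y \<noteq> y0 \<Longrightarrow> tree_dist E l x y = tree_dist E l x z + l {y, z}"
proof -
  obtain p where path_p: "simple_path E x z p"
    using assms(2) unfolding graph_connected_def by blast
  define q where "q = butlast p"
  define y0 where "y0 = last q"
  have "p = q @ [z]" using path_p by (auto simp: q_def simple_path_def)
  then have "q \<noteq> []" using path_p \<open>x \<noteq> z\<close> by (auto simp: simple_path_def)
  then have p: "p = butlast q @ y0 # [z]" using \<open>p = q @ [z]\<close> by (simp add: y0_def)
  have path_q: "simple_path E x y0 q" and "simple_path E y0 z [y0, z]"
    using simple_path_split[OF path_p[unfolded p]] \<open>q \<noteq> []\<close> by (simp_all add: y0_def)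
  then have edge: "{y0, z} \<in> E" by (simp add: simple_path_def)
  have "tree_dist E l x z = tree_dist E l x y0 + l {y0, z}"
    using tree_dist_snoc[OF acyclic path_q, of z] edge path_p \<open>p = q @ [z]\<close>
    by (simp add: insert_commute simple_path_def)
  moreover have "tree_dist E l x y = tree_dist E l x z + l {y, z}"
    if "{y, z} \<in> E" "y \<noteq> y0" for y
  proof -
    have "y \<notin> set p"
    proof
      assume "y \<in> set p"
      moreover have "y \<noteq> z" using simple_graph_edge_neq[OF simple that(1)] .
      ultimately obtain p1 p2 where q: "q = p1 @ y # p2"
        using \<open>p = q @ [z]\<close> by (auto dest: split_list)
      then have "p2 \<noteq> []" using \<open>y \<noteq> y0\<close> by (auto simp: y0_def)
      have "simple_path E y z (y # p2 @ [z])"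
        using simple_path_split(2)[of E x z p1 y "p2 @ [z]"] path_p \<open>p = q @ [z]\<close> q by simp
      moreover have "length (y # p2 @ [z]) \<ge> 3" using \<open>p2 \<noteq> []\<close> by (cases p2) auto
      ultimately show False
        using acyclic_no_closing_edge[OF acyclic] that(1) by (auto simp: insert_commute)
    qed
    then show ?thesis using tree_dist_snoc[OF acyclic path_p] that(1) by (simp add: insert_commute)
  qed
  ultimately show ?thesis using that edge by blast
qed

definition inv_diag_term :: "real \<Rightarrow> real" where
  "inv_diag_term t = exp (- 2 * t) / (1 - exp (- 2 * t))"

definition inv_edge_term :: "real \<Rightarrow> real" where
  "inv_edge_term t = exp (- t) / (1 - exp (- 2 * t))"

definition similarity_inverse :: "'a set set \<Rightarrow> ('a set \<Rightarrow> real) \<Rightarrow> real ^ 'a ^ 'a" where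
  "similarity_inverse E l = (\<chi> y z.
     if y = z then 1 + (\<Sum>e\<in>{e\<in>E. z \<in> e}. inv_diag_term (l e))
     else if {y, z} \<in> E then - inv_edge_term (l {y, z}) else 0)"

lemma inv_term_farther:
  "exp (- d) * inv_diag_term t - exp (- (d + t)) * inv_edge_term t = 0"
proof -
  have "exp (- (d + t)) * exp (- t) = exp (- d) * exp (- 2 * t)"
    by (simp flip: exp_add)
  then show ?thesis by (simp add: inv_diag_term_def inv_edge_term_def field_simps)
qed

lemma inv_term_nearer:
  assumes "t \<noteq> 0"
  shows "exp (- d) * inv_diag_term t - exp (- (d - t)) * inv_edge_term t = - exp (- d)"
proof -
  have "exp (- (d - t)) * inv_edge_term t = exp (- d) * (1 / (1 - exp (- 2 * t)))"
    by (simp add: inv_edge_term_def flip: exp_add)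
  then have "exp (- d) * inv_diag_term t - exp (- (d - t)) * inv_edge_term t
      = exp (- d) * (exp (- 2 * t) / (1 - exp (- 2 * t)) - 1 / (1 - exp (- 2 * t)))"
    by (simp add: inv_diag_term_def right_diff_distrib)
  also have "\<dots> = exp (- d) * ((exp (- 2 * t) - 1) / (1 - exp (- 2 * t)))"
    by (simp only: diff_divide_distrib)
  also have "(exp (- 2 * t) - 1) / (1 - exp (- 2 * t)) = - 1"
    using assms by (simp add: divide_eq_minus_1_iff)
  finally show ?thesis by simp
qed

lemma similarity_mult_inverse_entry:
  fixes E :: "('a::finite) set set" and l :: "'a set \<Rightarrow> real"
  assumes "simple_graph E"
  defines "D \<equiv> \<lambda>x y. exp (- tree_dist E l x y)"
  shows "(similarity_matrix E l ** similarity_inverse E l) $ x $ z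
    = D x z + (\<Sum>y\<in>{y. {y, z} \<in> E}.
        D x z * inv_diag_term (l {y, z}) - D x y * inv_edge_term (l {y, z}))"
proof -
  define N where "N = {y. {y, z} \<in> E}"
  have "z \<notin> N" using simple_graph_edge_neq[OF assms(1), of z z] by (auto simp: N_def)
  have diag: "(\<Sum>e\<in>{e\<in>E. z \<in> e}. inv_diag_term (l e)) = (\<Sum>y\<in>N. inv_diag_term (l {y, z}))"
    unfolding N_def by (rule sum_edges_at[OF assms(1)])
  define S where "S = 1 + (\<Sum>y\<in>N. inv_diag_term (l {y, z}))"
  have W: "similarity_inverse E l $ y $ z
      = (if y = z then S else 0) - (if y \<in> N then inv_edge_term (l {y, z}) else 0)" for y
    using \<open>z \<notin> N\<close> diag by (auto simp: similarity_inverse_def N_def S_def)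
  have "(similarity_matrix E l ** similarity_inverse E l) $ x $ z
      = (\<Sum>y\<in>UNIV. D x y * similarity_inverse E l $ y $ z)"
    by (simp add: matrix_matrix_mult_def similarity_matrix_def D_def)
  also have "\<dots> = (\<Sum>y\<in>UNIV. (if y = z then D x y * S else 0)
      - (if y \<in> N then D x y * inv_edge_term (l {y, z}) else 0))"
    by (intro sum.cong) (simp_all add: W right_diff_distrib)
  also have "\<dots> = D x z * S - (\<Sum>y\<in>N. D x y * inv_edge_term (l {y, z}))"
    by (simp add: sum_subtractf sum.inter_restrict[symmetric])
  finally show ?thesis
    by (simp add: N_def S_def sum_subtractf sum_distrib_left algebra_simps)
qed

lemma similarity_mult_inverse_diag:
  fixes E :: "('a::finite) set set"
  assumes "weighted_tree E l"
  shows "(similarity_matrix E l ** similarity_inverse E l) $ z $ z = 1"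
proof -
  have simple: "simple_graph E" and acyclic: "graph_acyclic E"
    using assms by (simp_all add: weighted_tree_def)
  have "tree_dist E l z y = 0 + l {y, z}" if "{y, z} \<in> E" for y
    using tree_dist_edge[OF acyclic] simple_graph_edge_neq[OF simple] that
    by (simp add: insert_commute)
  then show ?thesis
    using inv_term_farther[of 0]
    by (simp add: similarity_mult_inverse_entry[OF simple] tree_dist_self[OF acyclic])
qed

lemma similarity_mult_inverse_off_diag:
  fixes E :: "('a::finite) set set"
  assumes "weighted_tree E l" "x \<noteq> z"
  shows "(similarity_matrix E l ** similarity_inverse E l) $ x $ z = 0"
proof -
  have simple: "simple_graph E"
    using assms by (simp add: weighted_tree_def)
  obtain y0 where y0: "{y0, z} \<in> E" "tree_dist E l x z = tree_dist E l x y0 + l {y0, z}"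
    and farther: "\<And>y. {y, z} \<in> E \<Longrightarrow> y \<noteq> y0 \<Longrightarrow> tree_dist E l x y = tree_dist E l x z + l {y, z}"
    using tree_dist_neighbours assms unfolding weighted_tree_def by metis
  define d where "d = tree_dist E l x z"
  define summand where "summand = (\<lambda>y. exp (- d) * inv_diag_term (l {y, z})
      - exp (- tree_dist E l x y) * inv_edge_term (l {y, z}))"
  have "l {y0, z} \<noteq> 0" using assms(1) y0(1) by (auto simp: weighted_tree_def)
  moreover have "tree_dist E l x y0 = d - l {y0, z}" using y0(2) by (simp add: d_def)
  ultimately have "summand y0 = - exp (- d)"
    using inv_term_nearer by (simp add: summand_def)
  moreover have "summand y = 0" if "y \<in> {y. {y, z} \<in> E} - {y0}" for y
    using farther that inv_term_farther by (simp add: summand_def d_def)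
  ultimately have "(\<Sum>y\<in>{y. {y, z} \<in> E}. summand y) = - exp (- d)"
    using y0(1) by (simp add: sum.remove)
  then show ?thesis
    by (simp add: similarity_mult_inverse_entry[OF simple] summand_def d_def)
qed

lemma similarity_mult_inverse:
  fixes E :: "('a::finite) set set"
  assumes "weighted_tree E l"
  shows "similarity_matrix E l ** similarity_inverse E l = mat 1"
  using similarity_mult_inverse_diag[OF assms] similarity_mult_inverse_off_diag[OF assms]
  by (simp add: vec_eq_iff mat_def)

lemma matrix_inv_right_inverse:
  fixes A B :: "'a::field ^ 'n ^ 'n"
  assumes "A ** B = mat 1"
  shows "invertible A" and "matrix_inv A = B"
proof -
  have "B ** A = mat 1" using assms matrix_left_right_inverse by blast
  then show "invertible A" using assms unfolding invertible_def by blast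
  have "A ** matrix_inv A = mat 1 \<and> matrix_inv A ** A = mat 1"
    unfolding matrix_inv_def using assms \<open>B ** A = mat 1\<close> by (rule someI[of _ B, OF conjI])
  then have "matrix_inv A ** A = mat 1" ..
  have "matrix_inv A = matrix_inv A ** (A ** B)" using assms by simp
  also have "\<dots> = (matrix_inv A ** A) ** B" by (simp add: matrix_mul_assoc)
  finally show "matrix_inv A = B" using \<open>matrix_inv A ** A = mat 1\<close> by simp
qed

theorem proposition4p1:
  fixes E :: "('a::finite) set set" and l :: "'a set \<Rightarrow> real"
  assumes "weighted_tree E l"
  defines "Z \<equiv> similarity_matrix E l"
  shows "invertible Z
    \<and> (\<forall>x. matrix_inv Z $ x $ x
           = 1 + (\<Sum>e\<in>{e\<in>E. x \<in> e}. exp (- 2 * l e) / (1 - exp (- 2 * l e))))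
    \<and> (\<forall>x y. x \<noteq> y \<and> {x, y} \<notin> E \<longrightarrow> matrix_inv Z $ x $ y = 0)
    \<and> (\<forall>x y. x \<noteq> y \<and> {x, y} \<in> E \<longrightarrow>
           matrix_inv Z $ x $ y = - (exp (- l {x, y}) / (1 - exp (- 2 * l {x, y}))))"
proof -
  have "Z ** similarity_inverse E l = mat 1"
    unfolding Z_def using similarity_mult_inverse[OF assms(1)] .
  then have "invertible Z" and "matrix_inv Z = similarity_inverse E l"
    by (rule matrix_inv_right_inverse)+
  then show ?thesis
    by (simp add: similarity_inverse_def inv_diag_term_def inv_edge_term_def)
qed

end
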